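(* Let $X$ be a compact Hausdorff space, $A=C(X)$, $H_A=l_2(A)$. Let $(F_1,F_2,\dots)\in H'_A$ and let $E\subseteq X$ be the set of points at which the point-wise sum $x\mapsto\sum_i\overline{F_i(x)}F_i(x)$ is continuous. Then $(F_1,F_2,\dots)$ is the representing sequence of some element $F\in H''_A$ if and only if for each $f=(f_1,f_2,\dots)\in H'_A$ there exists a continuous function $\alpha_f\in C(X)$ such that the point-wise sum $x\mapsto \sum_i \overline{F_i(x)}f_i(x)$ coincides with $\alpha_f$ on $E$. In this case $F(f)=\alpha_f$ for all $f\in H'_A$.
   Context: $H_A=l_2(A)$ is the set of sequences $(a_1,a_2,\dots)$ in $A$ with $\sum_i a_i^*a_i$ norm convergent; it is a right Hilbert $A$-module with componentwise action and inner product $\langle a,b\rangle=\sum_i a_i^*b_i$, with standard basis vectors $e_i$. The dual $H'_A$ (bounded $A$-linear maps $H_A\to A$) is identified, via $f\mapsto (f(e_i)^* )_i$ (so $f(x)=\sum_i f_i^*x_i$), with the set of sequences $(f_1,f_2,\dots)$, $f_i\in C(X)$, such that $\sup_N\|\sum_{i=1}^N\overline{f_i}f_i\|<\infty$ (sup norm), with norm $\|f\|^2=\sup_N\|\sum_{i=1}^N\overline{f_i}f_i\|$ and componentwise right $A$-module structure. The second dual $H''_A$ is the set of bounded $A$-linear maps $H'_A\to A$. Let $\hat e_i\in H'_A$ be the sequence with $1$ in place $i$ and $0$ elsewhere. An element $F\in H''_A$ is represented by the sequence $(F_i)$ with $F_i=F(\hat e_i)^*$ (the canonical isometric embedding $H''_A\subseteq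 H'_A$). For every point $x$ the point-wise sums above converge, since the sequences $(F_i(x))$, $(f_i(x))$ lie in $l_2(\mathbb C)$. *)

theory Defs
  imports "HOL-Analysis.Analysis"
begin

text \<open>X is the type 'a (a topological space, Hausdorff and compact assumed in the theorem);
A = C(X) is the set of continuous complex-valued functions on X.\<close>

definition CX :: "('a::topological_space \<Rightarrow> complex) set" where
  "CX = {a. continuous_on UNIV a}"

text \<open>The dual module H'_A, identified with sequences (f_1, f_2, ...) in C(X) with
  sup_N || sum_{i<N} conj(f_i) f_i || finite.\<close>
definition dual_HA :: "(nat \<Rightarrow> 'a::topological_space \<Rightarrow> complex) set" where
  "dual_HA = {f. (\<forall>i. f i \<in> CX) \<and>
      (\<exists>B. \<forall>N x. cmod (\<Sum>i<N. cnj (f i x) * f i x) \<le> B)}"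

definition dual_norm :: "(nat \<Rightarrow> 'a::topological_space \<Rightarrow> complex) \<Rightarrow> real" where
  "dual_norm f = sqrt (Sup {cmod (\<Sum>i<N. cnj (f i x) * f i x) | N x. True})"

text \<open>The second dual H''_A: bounded A-linear maps H'_A \<rightarrow> A
  (right module action on H'_A componentwise). Only the values on H'_A matter.\<close>
definition bidual_HA :: "((nat \<Rightarrow> 'a::topological_space \<Rightarrow> complex) \<Rightarrow> ('a \<Rightarrow> complex)) set" where
  "bidual_HA = {\<Phi>.
      (\<forall>f\<in>dual_HA. \<Phi> f \<in> CX) \<and>
      (\<forall>f\<in>dual_HA. \<forall>g\<in>dual_HA. \<Phi> (\<lambda>i x. f i x + g i x) = (\<lambda>x. \<Phi> f x + \<Phi> g x)) \<and>
      (\<forall>f\<in>dual_HA. \<forall>a\<in>CX. \<Phi> (\<lambda>i x. f i x * a x) = (\<lambda>x. \<Phi> f x * a x)) \<and>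
      (\<exists>C. \<forall>f\<in>dual_HA. \<forall>x. cmod (\<Phi> f x) \<le> C * dual_norm f)}"

definition hat_e :: "nat \<Rightarrow> nat \<Rightarrow> 'a \<Rightarrow> complex" where
  "hat_e i = (\<lambda>j x. if j = i then 1 else 0)"

definition rep_seq :: "((nat \<Rightarrow> 'a \<Rightarrow> complex) \<Rightarrow> ('a \<Rightarrow> complex)) \<Rightarrow> nat \<Rightarrow> 'a \<Rightarrow> complex" where
  "rep_seq \<Phi> = (\<lambda>i x. cnj (\<Phi> (hat_e i) x))"

end

theory Submission
  imports Defs
begin

text \<open>
  Additivity and C(X)-linearity applied to the vectors \<open>hat_e i\<close> show that an element
  \<Phi> of H''_A acts on the truncations of f by the partial sums of
  \<open>\<Sum>i. cnj (F i x) * f i x\<close>. On the remaining tails \<Phi> is local: multiplying by an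
  Urysohn bump shows that \<open>\<Phi> g\<close> at y is bounded by the partial square norms of g near y.
  The pointwise square norm \<open>\<Sum>i. cmod (F i x)^2\<close> is a supremum of continuous functions,
  so by Baire its points of continuity E are dense, and near a point of E the tails of F are
  uniformly small. Together with Cauchy-Schwarz at a nearby point where the tail of f is small
  too, this forces \<open>\<Phi> f\<close> to equal the pointwise sum on E. Conversely, continuous
  functions agreeing with the pointwise sums on the dense set E inherit additivity,
  C(X)-linearity and boundedness from them.
\<close>

lemma Hausdorff_space_euclidean_t2: "Hausdorff_space (euclidean :: 'a::t2_space topology)"
  unfolding Hausdorff_space_def by (metis disjnt_def hausdorff open_openin)

lemma compact_space_euclidean_iff:
  "compact_space (euclidean :: 'a::topological_space topology) \<longleftrightarrow> compact (UNIV :: 'a set)"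
  by (simp add: compact_space_def)

lemma exists_Urysohn_bump:
  fixes y :: "'a::t2_space"
  assumes "compact (UNIV :: 'a set)" "open W" "y \<in> W"
  obtains a :: "'a \<Rightarrow> real"
  where "continuous_on UNIV a" "\<And>z. 0 \<le> a z \<and> a z \<le> 1" "a y = 1" "\<And>z. z \<notin> W \<Longrightarrow> a z = 0"
proof -
  have "normal_space (euclidean :: 'a topology)"
    using assms(1) Hausdorff_space_euclidean_t2
    by (intro compact_Hausdorff_or_regular_imp_normal_space) (auto simp: compact_space_euclidean_iff)
  moreover have "closedin euclidean (- W)" "closedin euclidean {y}" "disjnt (- W) {y}"
    using assms(2,3) by (auto simp: disjnt_def)
  ultimately obtain a where a: "continuous_map euclidean (top_of_set {0::real..1}) a"
    "a ` (- W) \<subseteq> {0}" "a ` {y} \<subseteq> {1}"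
    using Urysohn_lemma[of euclidean "- W" "{y}" 0 1] by auto
  then have "continuous_map euclidean euclidean a" "range a \<subseteq> {0..1}"
    by (auto simp: continuous_map_in_subtopology)
  show ?thesis
  proof (rule that)
    show "continuous_on UNIV a" using \<open>continuous_map euclidean euclidean a\<close> by simp
    show "0 \<le> a z \<and> a z \<le> 1" for z
      using \<open>range a \<subseteq> {0..1}\<close> by (meson atLeastAtMost_iff rangeI subsetD)
  qed (use a(2,3) in auto)
qed

lemma closure_Inter_open_dense_eq_UNIV:
  fixes G :: "nat \<Rightarrow> 'a::t2_space set"
  assumes "compact (UNIV :: 'a set)"
    and "\<And>n. open (G n)" and "\<And>n V. open V \<Longrightarrow> V \<noteq> {} \<Longrightarrow> V \<inter> G n \<noteq> {}"
  shows "closure (\<Inter>n. G n) = UNIV"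
proof -
  have cs: "compact_space (euclidean :: 'a topology)"
    using assms(1) by (simp add: compact_space_euclidean_iff)
  have dense: "closure (G n) = UNIV" for n
  proof (rule ccontr)
    assume "closure (G n) \<noteq> UNIV"
    then have "- closure (G n) \<inter> G n \<noteq> {}" using assms(3) by blast
    then show False using closure_subset[of "G n"] by blast
  qed
  have "euclidean closure_of \<Inter>(range G) = topspace euclidean"
  proof (rule Baire_category)
    show "completely_metrizable_space (euclidean :: 'a topology) \<or>
        locally_compact_space (euclidean :: 'a topology) \<and> regular_space (euclidean :: 'a topology)"
      by (intro disjI2) (simp add: compact_imp_locally_compact_space[OF cs]
          compact_Hausdorff_imp_regular_space[OF cs Hausdorff_space_euclidean_t2])
    show "countable (range G)" by simp
    show "openin euclidean T \<and> euclidean closure_of T = topspace euclidean" if "T \<in> range G" for T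
      using that assms(2) dense by auto
  qed
  then show ?thesis by simp
qed

lemma continuous_eq_on_dense:
  fixes \<alpha> \<beta> :: "'a::topological_space \<Rightarrow> 'b::t2_space"
  assumes "closure E = UNIV" "continuous_on UNIV \<alpha>" "continuous_on UNIV \<beta>" "\<forall>x\<in>E. \<alpha> x = \<beta> x"
  shows "\<alpha> = \<beta>"
proof -
  have "closed {x. \<alpha> x = \<beta> x}" by (rule closed_Collect_eq[OF assms(2,3)])
  then have "closure E \<subseteq> {x. \<alpha> x = \<beta> x}" using assms(4) by (intro closure_minimal) auto
  then show ?thesis using assms(1) by auto
qed

lemma isCont_if_locally_uniform_approx:
  fixes f :: "'a::t2_space \<Rightarrow> real"
  assumes "\<And>e. e > 0 \<Longrightarrow> \<exists>g U. isCont g x \<and> open U \<and> x \<in> U \<and> (\<forall>y\<in>U. \<bar>f y - g y\<bar> < e)"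
  shows "isCont f x"
  unfolding isCont_def
proof (rule tendstoI)
  fix e :: real assume "e > 0"
  then obtain g U where g: "isCont g x" "open U" "x \<in> U" "\<And>y. y \<in> U \<Longrightarrow> \<bar>f y - g y\<bar> < e / 3"
    using assms[of "e / 3"] by auto
  have "eventually (\<lambda>y. dist (g y) (g x) < e / 3) (at x)"
    using g(1) \<open>e > 0\<close> unfolding isCont_def by (intro tendstoD) auto
  moreover have "eventually (\<lambda>y. y \<in> U) (at x)"
    using g(2,3) eventually_at_topological by blast
  ultimately show "eventually (\<lambda>y. dist (f y) (f x) < e) (at x)"
  proof eventually_elim
    case (elim y)
    then show ?case
      using g(4)[of y] g(4)[OF g(3)] unfolding dist_real_def abs_less_iff by linarith
  qed
qed

lemma le_zero_if_le_eps_plus_sqrt: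
  fixes d K :: real
  assumes "\<And>\<eta>. \<eta> > 0 \<Longrightarrow> d \<le> \<eta> + K * sqrt \<eta>"
  shows "d \<le> 0"
proof -
  have "((\<lambda>\<eta>. \<eta> + K * sqrt \<eta>) \<longlongrightarrow> 0) (at_right 0)"
    by (auto intro!: tendsto_eq_intros)
  then show ?thesis
    by (rule tendsto_lowerbound) (auto simp: eventually_at_right_field assms intro!: exI[of _ 1])
qed

definition partial_sqnorm :: "(nat \<Rightarrow> 'a \<Rightarrow> complex) \<Rightarrow> nat \<Rightarrow> 'a \<Rightarrow> real" where
  "partial_sqnorm g N x = (\<Sum>i<N. (cmod (g i x))\<^sup>2)"

definition pointwise_sqnorm :: "(nat \<Rightarrow> 'a \<Rightarrow> complex) \<Rightarrow> 'a \<Rightarrow> real" where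
  "pointwise_sqnorm g x = (\<Sum>i. (cmod (g i x))\<^sup>2)"

definition pairing :: "(nat \<Rightarrow> 'a \<Rightarrow> complex) \<Rightarrow> (nat \<Rightarrow> 'a \<Rightarrow> complex) \<Rightarrow> 'a \<Rightarrow> complex" where
  "pairing F f x = (\<Sum>i. cnj (F i x) * f i x)"

definition seq_trunc :: "nat \<Rightarrow> (nat \<Rightarrow> 'a \<Rightarrow> complex) \<Rightarrow> nat \<Rightarrow> 'a \<Rightarrow> complex" where
  "seq_trunc M f = (\<lambda>i x. if i < M then f i x else 0)"

definition seq_tail :: "nat \<Rightarrow> (nat \<Rightarrow> 'a \<Rightarrow> complex) \<Rightarrow> nat \<Rightarrow> 'a \<Rightarrow> complex" where
  "seq_tail M f = (\<lambda>i x. if i < M then 0 else f i x)"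

lemma cnj_mult_self_eq_sqnorm: "cnj z * z = complex_of_real ((cmod z)\<^sup>2)"
  by (metis complex_norm_square mult.commute of_real_power)

lemma norm_sum_cnj_mult_self: "cmod (\<Sum>i<N. cnj (g i x) * g i x) = partial_sqnorm g N x"
  unfolding cnj_mult_self_eq_sqnorm of_real_sum[symmetric] norm_of_real partial_sqnorm_def
  by (simp add: sum_nonneg)

lemma partial_sqnorm_nonneg: "partial_sqnorm g N x \<ge> 0"
  unfolding partial_sqnorm_def by (simp add: sum_nonneg)

lemma partial_sqnorm_mono: "M \<le> N \<Longrightarrow> partial_sqnorm g M x \<le> partial_sqnorm g N x"
  unfolding partial_sqnorm_def by (rule sum_mono2) auto

lemma dual_HA_iff:
  "g \<in> dual_HA \<longleftrightarrow> (\<forall>i. continuous_on UNIV (g i)) \<and> (\<exists>B. \<forall>N x. partial_sqnorm g N x \<le> B)"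
  unfolding dual_HA_def CX_def by (simp add: norm_sum_cnj_mult_self)

lemma dual_HA_continuous: "g \<in> dual_HA \<Longrightarrow> continuous_on UNIV (g i)"
  using dual_HA_iff by blast

lemma partial_sqnorm_continuous: "g \<in> dual_HA \<Longrightarrow> continuous_on UNIV (partial_sqnorm g N)"
  unfolding partial_sqnorm_def using dual_HA_continuous by (intro continuous_intros) auto

lemma dual_HA_summable:
  assumes "g \<in> dual_HA" shows "summable (\<lambda>i. (cmod (g i x))\<^sup>2)"
proof -
  obtain B where B: "\<And>N x. partial_sqnorm g N x \<le> B" using assms dual_HA_iff by blast
  show ?thesis
  proof (rule bounded_imp_summable[of _ B])
    show "(\<Sum>i\<le>n. (cmod (g i x))\<^sup>2) \<le> B" for n
      using B[of "Suc n" x] unfolding partial_sqnorm_def lessThan_Suc_atMost .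
  qed simp
qed

lemma LIMSEQ_partial_sqnorm:
  "g \<in> dual_HA \<Longrightarrow> (\<lambda>N. partial_sqnorm g N x) \<longlonglongrightarrow> pointwise_sqnorm g x"
  unfolding partial_sqnorm_def pointwise_sqnorm_def by (rule summable_LIMSEQ[OF dual_HA_summable])

lemma partial_sqnorm_le_pointwise:
  "g \<in> dual_HA \<Longrightarrow> partial_sqnorm g N x \<le> pointwise_sqnorm g x"
  unfolding partial_sqnorm_def pointwise_sqnorm_def by (rule sum_le_suminf[OF dual_HA_summable]) auto

lemma pointwise_sqnorm_minus_partial:
  "g \<in> dual_HA \<Longrightarrow> pointwise_sqnorm g x - partial_sqnorm g N x = (\<Sum>i. (cmod (g (i + N) x))\<^sup>2)"
  using suminf_split_initial_segment[OF dual_HA_summable, of g x N]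
  unfolding pointwise_sqnorm_def partial_sqnorm_def by simp

lemma partial_sqnorm_le_dual_norm:
  assumes "g \<in> dual_HA"
  shows "partial_sqnorm g N x \<le> (dual_norm g)\<^sup>2" and "dual_norm g \<ge> 0"
proof -
  obtain B where B: "\<And>N x. partial_sqnorm g N x \<le> B" using assms dual_HA_iff by blast
  let ?S = "{partial_sqnorm g N x | N x. True}"
  have "partial_sqnorm g N x \<le> Sup ?S"
    by (rule cSup_upper) (use B in \<open>auto simp: bdd_above_def\<close>)
  moreover have "Sup ?S \<ge> 0" using calculation partial_sqnorm_nonneg[of g N x] by linarith
  ultimately show "partial_sqnorm g N x \<le> (dual_norm g)\<^sup>2" "dual_norm g \<ge> 0"
    unfolding dual_norm_def norm_sum_cnj_mult_self by simp_all
qed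

lemma pointwise_sqnorm_le_dual_norm:
  assumes "g \<in> dual_HA"
  shows "pointwise_sqnorm g x \<le> (dual_norm g)\<^sup>2"
  using partial_sqnorm_le_dual_norm(1)[OF assms] unfolding pointwise_sqnorm_def partial_sqnorm_def
  by (intro suminf_le_const dual_HA_summable[OF assms])

lemma dual_norm_le: "(\<And>N x. partial_sqnorm g N x \<le> D) \<Longrightarrow> dual_norm g \<le> sqrt D"
  unfolding dual_norm_def norm_sum_cnj_mult_self by (intro real_sqrt_le_mono cSup_least) auto

lemma dual_HA_if_dominated:
  assumes "g \<in> dual_HA" "\<And>i. continuous_on UNIV (h i)" "\<And>i x. cmod (h i x) \<le> cmod (g i x)"
  shows "h \<in> dual_HA"
proof -
  obtain B where B: "\<And>N x. partial_sqnorm g N x \<le> B" using assms dual_HA_iff by blast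
  have "partial_sqnorm h N x \<le> partial_sqnorm g N x" for N x
    unfolding partial_sqnorm_def by (rule sum_mono) (simp add: assms(3) power_mono)
  with B assms(2) show ?thesis unfolding dual_HA_iff by (meson order_trans)
qed

lemma dual_HA_add:
  assumes "f \<in> dual_HA" "g \<in> dual_HA"
  shows "(\<lambda>i x. f i x + g i x) \<in> dual_HA"
proof -
  obtain B C where B: "\<And>N x. partial_sqnorm f N x \<le> B" and C: "\<And>N x. partial_sqnorm g N x \<le> C"
    using assms dual_HA_iff by meson
  have "(cmod (f i x + g i x))\<^sup>2 \<le> 2 * (cmod (f i x))\<^sup>2 + 2 * (cmod (g i x))\<^sup>2" for i x
  proof -
    have "(cmod (f i x + g i x))\<^sup>2 \<le> (cmod (f i x) + cmod (g i x))\<^sup>2"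
      by (simp add: power_mono norm_triangle_ineq)
    also have "\<dots> \<le> 2 * (cmod (f i x))\<^sup>2 + 2 * (cmod (g i x))\<^sup>2"
      using zero_le_power2[of "cmod (f i x) - cmod (g i x)"] by (simp add: power2_sum power2_diff)
    finally show ?thesis .
  qed
  then have sum_bound: "partial_sqnorm (\<lambda>i x. f i x + g i x) N x
      \<le> 2 * partial_sqnorm f N x + 2 * partial_sqnorm g N x" for N x
    unfolding partial_sqnorm_def by (simp add: sum_distrib_left sum.distrib[symmetric] sum_mono)
  have "partial_sqnorm (\<lambda>i x. f i x + g i x) N x \<le> 2 * B + 2 * C" for N x
    using sum_bound[of N x] B[of N x] C[of N x] by linarith
  moreover have "continuous_on UNIV (\<lambda>x. f i x + g i x)" for i
    using assms dual_HA_continuous by (intro continuous_intros) auto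
  ultimately show ?thesis unfolding dual_HA_iff by blast
qed

lemma dual_HA_mult:
  assumes "compact (UNIV :: 'a::topological_space set)" "f \<in> dual_HA" "a \<in> (CX :: ('a \<Rightarrow> complex) set)"
  shows "(\<lambda>i x. f i x * a x) \<in> dual_HA"
proof -
  obtain B where B: "\<And>N x. partial_sqnorm f N x \<le> B" using assms dual_HA_iff by blast
  have "compact (range a)" using assms(1,3) by (simp add: CX_def compact_continuous_image)
  then obtain K where K: "\<And>x. cmod (a x) \<le> K" by (meson bounded_iff compact_imp_bounded rangeI)
  have "partial_sqnorm (\<lambda>i x. f i x * a x) N x = (cmod (a x))\<^sup>2 * partial_sqnorm f N x" for N x
    unfolding partial_sqnorm_def by (simp add: sum_distrib_left norm_mult power_mult_distrib mult.commute)
  also have "\<dots> N x \<le> K\<^sup>2 * B" for N x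
    using B[of N x] K[of x] by (intro mult_mono power_mono) (auto simp: partial_sqnorm_nonneg)
  finally have "partial_sqnorm (\<lambda>i x. f i x * a x) N x \<le> K\<^sup>2 * B" for N x .
  moreover have "continuous_on UNIV (\<lambda>x. f i x * a x)" for i
    using assms dual_HA_continuous by (intro continuous_intros) (auto simp: CX_def)
  ultimately show ?thesis unfolding dual_HA_iff by blast
qed

lemma dual_HA_hat_e: "(hat_e i :: nat \<Rightarrow> 'a::topological_space \<Rightarrow> complex) \<in> dual_HA"
proof -
  have "partial_sqnorm (hat_e i) N x \<le> 1" for N and x :: 'a
  proof -
    have "partial_sqnorm (hat_e i) N x = (\<Sum>j<N. if j = i then 1 else 0)"
      unfolding partial_sqnorm_def hat_e_def by (rule sum.cong) auto
    also have "\<dots> \<le> 1" by (simp add: sum.delta)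
    finally show ?thesis .
  qed
  then show ?thesis unfolding dual_HA_iff hat_e_def by auto
qed

lemma dual_HA_seq_trunc:
  assumes "f \<in> dual_HA" shows "seq_trunc M f \<in> dual_HA"
proof (rule dual_HA_if_dominated[OF assms])
  show "continuous_on UNIV (seq_trunc M f i)" for i
    by (cases "i < M") (simp_all add: seq_trunc_def dual_HA_continuous[OF assms])
qed (simp add: seq_trunc_def)

lemma dual_HA_seq_tail:
  assumes "f \<in> dual_HA" shows "seq_tail M f \<in> dual_HA"
proof (rule dual_HA_if_dominated[OF assms])
  show "continuous_on UNIV (seq_tail M f i)" for i
    by (cases "i < M") (simp_all add: seq_tail_def dual_HA_continuous[OF assms])
qed (simp add: seq_tail_def)

lemma dual_HA_zero: "(\<lambda>i x. 0) \<in> dual_HA"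
  using dual_HA_seq_trunc[OF dual_HA_hat_e, of 0 0] by (simp add: seq_trunc_def)

lemma partial_sqnorm_seq_tail:
  assumes "g \<in> dual_HA"
  shows "partial_sqnorm (seq_tail M g) K x \<le> pointwise_sqnorm g x - partial_sqnorm g M x"
proof -
  have "partial_sqnorm (seq_tail M g) K x = (\<Sum>j<K - M. (cmod (g (j + M) x))\<^sup>2)"
  proof (induction K)
    case (Suc K)
    then show ?case
      by (cases "K < M") (auto simp: partial_sqnorm_def seq_tail_def Suc_diff_le)
  qed (simp add: partial_sqnorm_def)
  also have "\<dots> \<le> (\<Sum>j. (cmod (g (j + M) x))\<^sup>2)"
    by (rule sum_le_suminf) (auto intro: summable_ignore_initial_segment dual_HA_summable[OF assms])
  finally show ?thesis using pointwise_sqnorm_minus_partial[OF assms] by simp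
qed

lemma Cauchy_Schwarz_suminf:
  fixes a b :: "nat \<Rightarrow> complex"
  assumes a: "summable (\<lambda>i. (cmod (a i))\<^sup>2)" and b: "summable (\<lambda>i. (cmod (b i))\<^sup>2)"
  shows "summable (\<lambda>i. cnj (a i) * b i)"
    and "cmod (\<Sum>i. cnj (a i) * b i) \<le> sqrt (\<Sum>i. (cmod (a i))\<^sup>2) * sqrt (\<Sum>i. (cmod (b i))\<^sup>2)"
proof -
  let ?A = "\<Sum>i. (cmod (a i))\<^sup>2" and ?B = "\<Sum>i. (cmod (b i))\<^sup>2"
  have norm_eq: "cmod (cnj (a i) * b i) = cmod (a i) * cmod (b i)" for i by (simp add: norm_mult)
  have partial: "(\<Sum>i<n. cmod (cnj (a i) * b i)) \<le> sqrt ?A * sqrt ?B" for n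
  proof -
    have "(\<Sum>i<n. cmod (a i) * cmod (b i)) \<le> sqrt ((\<Sum>i<n. (cmod (a i))\<^sup>2) * (\<Sum>i<n. (cmod (b i))\<^sup>2))"
      by (rule real_le_rsqrt[OF Cauchy_Schwarz_ineq_sum])
    also have "\<dots> \<le> sqrt (?A * ?B)"
      using sum_le_suminf[OF a, of "{..<n}"] sum_le_suminf[OF b, of "{..<n}"]
      by (intro real_sqrt_le_mono mult_mono) (auto simp: sum_nonneg suminf_nonneg[OF a])
    finally show ?thesis by (simp add: norm_eq real_sqrt_mult)
  qed
  have abs_summable: "summable (\<lambda>i. cmod (cnj (a i) * b i))"
  proof (rule bounded_imp_summable[of _ "sqrt ?A * sqrt ?B"])
    show "(\<Sum>i\<le>n. cmod (cnj (a i) * b i)) \<le> sqrt ?A * sqrt ?B" for n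
      using partial[of "Suc n"] unfolding lessThan_Suc_atMost .
  qed simp
  then show "summable (\<lambda>i. cnj (a i) * b i)" by (rule summable_norm_cancel)
  have "cmod (\<Sum>i. cnj (a i) * b i) \<le> (\<Sum>i. cmod (cnj (a i) * b i))"
    by (rule summable_norm[OF abs_summable])
  also have "\<dots> \<le> sqrt ?A * sqrt ?B"
    by (rule suminf_le_const[OF abs_summable partial])
  finally show "cmod (\<Sum>i. cnj (a i) * b i) \<le> sqrt ?A * sqrt ?B" .
qed

lemma pairing_summable:
  "F \<in> dual_HA \<Longrightarrow> f \<in> dual_HA \<Longrightarrow> summable (\<lambda>i. cnj (F i x) * f i x)"
  using Cauchy_Schwarz_suminf(1)[OF dual_HA_summable dual_HA_summable] .

lemma pairing_minus_partial_sum: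
  assumes "F \<in> dual_HA" "f \<in> dual_HA"
  shows "cmod (pairing F f x - (\<Sum>i<N. cnj (F i x) * f i x))
    \<le> sqrt (pointwise_sqnorm F x - partial_sqnorm F N x) * dual_norm f"
proof -
  have tails: "summable (\<lambda>i. (cmod (F (i + N) x))\<^sup>2)" "summable (\<lambda>i. (cmod (f (i + N) x))\<^sup>2)"
    using assms by (auto intro: summable_ignore_initial_segment dual_HA_summable)
  have "pairing F f x - (\<Sum>i<N. cnj (F i x) * f i x) = (\<Sum>i. cnj (F (i + N) x) * f (i + N) x)"
    unfolding pairing_def using suminf_split_initial_segment[OF pairing_summable[OF assms], where k = N] by simp
  also have "cmod \<dots> \<le> sqrt (pointwise_sqnorm F x - partial_sqnorm F N x)
      * sqrt (pointwise_sqnorm f x - partial_sqnorm f N x)"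
    using Cauchy_Schwarz_suminf(2)[OF tails]
    by (simp add: pointwise_sqnorm_minus_partial[OF assms(1)] pointwise_sqnorm_minus_partial[OF assms(2)])
  also have "\<dots> \<le> sqrt (pointwise_sqnorm F x - partial_sqnorm F N x) * dual_norm f"
  proof (rule mult_left_mono)
    have "pointwise_sqnorm f x - partial_sqnorm f N x \<le> (dual_norm f)\<^sup>2"
      using pointwise_sqnorm_le_dual_norm[OF assms(2), of x] partial_sqnorm_nonneg[of f N x]
      by linarith
    then show "sqrt (pointwise_sqnorm f x - partial_sqnorm f N x) \<le> dual_norm f"
      using partial_sqnorm_le_dual_norm(2)[OF assms(2)] real_sqrt_le_mono by fastforce
  qed (simp add: partial_sqnorm_le_pointwise[OF assms(1)])
  finally show ?thesis .
qed

lemma pairing_minus_partial_sum_le: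
  assumes "F \<in> dual_HA" "f \<in> dual_HA" "pointwise_sqnorm F x - partial_sqnorm F N x < \<eta>"
  shows "cmod (pairing F f x - (\<Sum>i<N. cnj (F i x) * f i x)) \<le> sqrt \<eta> * dual_norm f"
proof -
  have "sqrt (pointwise_sqnorm F x - partial_sqnorm F N x) \<le> sqrt \<eta>" using assms(3) by simp
  then show ?thesis
    using pairing_minus_partial_sum[OF assms(1,2), of x N] partial_sqnorm_le_dual_norm(2)[OF assms(2)]
    by (meson mult_right_mono order_trans)
qed

lemma pairing_bound:
  assumes "F \<in> dual_HA" "f \<in> dual_HA"
  shows "cmod (pairing F f x) \<le> dual_norm F * dual_norm f"
proof -
  have "cmod (pairing F f x) \<le> sqrt (pointwise_sqnorm F x) * dual_norm f"
    using pairing_minus_partial_sum[OF assms, of x 0] by (simp add: partial_sqnorm_def)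
  also have "\<dots> \<le> dual_norm F * dual_norm f"
    using real_sqrt_le_mono[OF pointwise_sqnorm_le_dual_norm[OF assms(1)]]
      partial_sqnorm_le_dual_norm(2)[OF assms(1)] partial_sqnorm_le_dual_norm(2)[OF assms(2)]
    by (intro mult_right_mono) simp_all
  finally show ?thesis .
qed

lemma pairing_add:
  assumes "F \<in> dual_HA" "f \<in> dual_HA" "g \<in> dual_HA"
  shows "pairing F (\<lambda>i x. f i x + g i x) x = pairing F f x + pairing F g x"
  unfolding pairing_def
  using suminf_add[OF pairing_summable[OF assms(1,2)] pairing_summable[OF assms(1,3)]]
  by (simp add: distrib_left)

lemma pairing_mult:
  fixes F f :: "nat \<Rightarrow> 'a::topological_space \<Rightarrow> complex" and a :: "'a \<Rightarrow> complex"
  assumes "F \<in> dual_HA" "f \<in> dual_HA"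
  shows "pairing F (\<lambda>i x. f i x * a x) x = pairing F f x * a x"
  unfolding pairing_def using suminf_mult2[OF pairing_summable[OF assms], where c = "a x"]
  by (simp add: mult.assoc)

lemma pairing_hat_e: "pairing F (hat_e i) x = cnj (F i x)"
proof -
  have "(\<lambda>j. cnj (F j x) * hat_e i j x) = (\<lambda>j. if j = i then cnj (F j x) else 0)"
    unfolding hat_e_def by auto
  then show ?thesis
    unfolding pairing_def using sums_unique[OF sums_single[of i "\<lambda>j. cnj (F j x)"]] by simp
qed

lemma pairing_self: "F \<in> dual_HA \<Longrightarrow> pairing F F x = complex_of_real (pointwise_sqnorm F x)"
  unfolding pairing_def pointwise_sqnorm_def cnj_mult_self_eq_sqnorm
  by (rule suminf_of_real[symmetric, OF dual_HA_summable])

lemma bidual_HA_continuous: "\<Phi> \<in> bidual_HA \<Longrightarrow> f \<in> dual_HA \<Longrightarrow> continuous_on UNIV (\<Phi> f)"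
  unfolding bidual_HA_def CX_def by blast

lemma bidual_HA_add:
  "\<Phi> \<in> bidual_HA \<Longrightarrow> f \<in> dual_HA \<Longrightarrow> g \<in> dual_HA \<Longrightarrow>
    \<Phi> (\<lambda>i x. f i x + g i x) = (\<lambda>x. \<Phi> f x + \<Phi> g x)"
  unfolding bidual_HA_def by blast

lemma bidual_HA_mult:
  "\<Phi> \<in> bidual_HA \<Longrightarrow> f \<in> dual_HA \<Longrightarrow> a \<in> CX \<Longrightarrow> \<Phi> (\<lambda>i x. f i x * a x) = (\<lambda>x. \<Phi> f x * a x)"
  unfolding bidual_HA_def by blast

lemma bidual_HA_bound:
  assumes "\<Phi> \<in> bidual_HA"
  obtains C where "C \<ge> 0" "\<And>f x. f \<in> dual_HA \<Longrightarrow> cmod (\<Phi> f x) \<le> C * dual_norm f"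
proof -
  obtain C where C: "\<And>f x. f \<in> dual_HA \<Longrightarrow> cmod (\<Phi> f x) \<le> C * dual_norm f"
    using assms unfolding bidual_HA_def by blast
  have "cmod (\<Phi> f x) \<le> max C 0 * dual_norm f" if "f \<in> dual_HA" for f x
    using C[OF that, of x] mult_right_mono[OF max.cobounded1[of C 0] partial_sqnorm_le_dual_norm(2)[OF that]]
    by linarith
  then show ?thesis using that[of "max C 0"] by auto
qed

lemma bidual_HA_zero: "\<Phi> \<in> bidual_HA \<Longrightarrow> \<Phi> (\<lambda>i x. 0) = (\<lambda>x. 0)"
  using bidual_HA_add[OF _ dual_HA_zero dual_HA_zero, of \<Phi>] by (simp add: fun_eq_iff)

lemma rep_seq_hat_e: "rep_seq \<Phi> = F \<Longrightarrow> \<Phi> (hat_e i) x = cnj (F i x)"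
  unfolding rep_seq_def by (metis complex_cnj_cnj)

lemma bidual_HA_seq_trunc:
  assumes "compact (UNIV :: 'a::topological_space set)"
    and "\<Phi> \<in> bidual_HA" "rep_seq \<Phi> = F" "f \<in> dual_HA"
  shows "\<Phi> (seq_trunc M f) = (\<lambda>x::'a. \<Sum>i<M. cnj (F i x) * f i x)"
proof (induction M)
  case 0
  then show ?case using bidual_HA_zero[OF assms(2)] by (simp add: seq_trunc_def)
next
  case (Suc M)
  have fM: "f M \<in> CX" using assms(4) dual_HA_continuous by (simp add: CX_def)
  have "seq_trunc (Suc M) f = (\<lambda>i x. seq_trunc M f i x + hat_e M i x * f M x)"
    by (auto simp: seq_trunc_def hat_e_def fun_eq_iff)
  then have "\<Phi> (seq_trunc (Suc M) f) = (\<lambda>x. \<Phi> (seq_trunc M f) x + \<Phi> (hat_e M) x * f M x)"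
    using bidual_HA_add[OF assms(2) dual_HA_seq_trunc[OF assms(4)] dual_HA_mult[OF assms(1) dual_HA_hat_e fM]]
      bidual_HA_mult[OF assms(2) dual_HA_hat_e fM] by simp
  then show ?case using Suc rep_seq_hat_e[OF assms(3)] by simp
qed

lemma bidual_HA_seq_tail:
  fixes x :: "'a::topological_space"
  assumes "compact (UNIV :: 'a set)"
    and "\<Phi> \<in> bidual_HA" "rep_seq \<Phi> = F" "f \<in> dual_HA"
  shows "\<Phi> (seq_tail M f) x = \<Phi> f x - (\<Sum>i<M. cnj (F i x) * f i x)"
proof -
  have "f = (\<lambda>i x. seq_trunc M f i x + seq_tail M f i x)"
    by (auto simp: seq_trunc_def seq_tail_def fun_eq_iff)
  then have "\<Phi> f x = \<Phi> (seq_trunc M f) x + \<Phi> (seq_tail M f) x"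
    by (metis bidual_HA_add[OF assms(2) dual_HA_seq_trunc[OF assms(4)] dual_HA_seq_tail[OF assms(4)]])
  then show ?thesis using bidual_HA_seq_trunc[OF assms] by simp
qed

text \<open>Locality: multiplying g by an Urysohn bump supported in W leaves the value at y unchanged.\<close>
lemma bidual_HA_local_bound:
  fixes y :: "'a::t2_space"
  assumes "compact (UNIV :: 'a set)"
    and "\<Phi> \<in> bidual_HA" "C \<ge> 0" "\<And>f x. f \<in> dual_HA \<Longrightarrow> cmod (\<Phi> f x) \<le> C * dual_norm f"
    and "g \<in> dual_HA" "open W" "y \<in> W" "\<And>z N. z \<in> W \<Longrightarrow> partial_sqnorm g N z \<le> \<delta>\<^sup>2" "\<delta> \<ge> 0"
  shows "cmod (\<Phi> g y) \<le> C * \<delta>"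
proof -
  obtain a :: "'a \<Rightarrow> real" where a: "continuous_on UNIV a" "\<And>z. 0 \<le> a z \<and> a z \<le> 1" "a y = 1"
    "\<And>z. z \<notin> W \<Longrightarrow> a z = 0"
    using exists_Urysohn_bump[OF assms(1,6,7)] by blast
  let ?a = "\<lambda>z. complex_of_real (a z)"
  let ?g = "\<lambda>i x. g i x * ?a x"
  have aCX: "?a \<in> CX" unfolding CX_def mem_Collect_eq using a(1) by (intro continuous_intros)
  have "partial_sqnorm ?g N z = (a z)\<^sup>2 * partial_sqnorm g N z" for N z
    unfolding partial_sqnorm_def sum_distrib_left
    by (simp add: norm_mult power_mult_distrib mult.commute)
  also have "\<dots> N z \<le> \<delta>\<^sup>2" for N z
  proof (cases "z \<in> W")
    case True
    have "(a z)\<^sup>2 \<le> 1" using a(2)[of z] by (simp add: power_le_one)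
    from mult_mono[OF this assms(8)[OF True, of N]] show ?thesis
      using partial_sqnorm_nonneg[of g N z] by simp
  qed (simp add: a(4))
  finally have "dual_norm ?g \<le> \<delta>" using dual_norm_le[of ?g "\<delta>\<^sup>2"] assms(9) by simp
  have "\<Phi> g y = \<Phi> ?g y" using bidual_HA_mult[OF assms(2,5) aCX] a(3) by simp
  also have "cmod \<dots> \<le> C * dual_norm ?g" by (rule assms(4)[OF dual_HA_mult[OF assms(1,5) aCX]])
  also have "\<dots> \<le> C * \<delta>" using \<open>dual_norm ?g \<le> \<delta>\<close> assms(3) by (rule mult_left_mono)
  finally show ?thesis .
qed

text \<open>Near a point almost maximising the pointwise square norm on V, the partial sums
  already exceed that supremum up to \<eta>, so the tails are smaller than \<eta>.\<close>
lemma exists_open_small_tail: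
  assumes "g \<in> dual_HA" "open V" "V \<noteq> {}" "\<eta> > 0"
  obtains y W M where "y \<in> W" "open W" "W \<subseteq> V" "N \<le> M"
    "\<And>z. z \<in> W \<Longrightarrow> pointwise_sqnorm g z - partial_sqnorm g M z < \<eta>"
proof -
  let ?S = "Sup (pointwise_sqnorm g ` V)"
  have bdd: "bdd_above (pointwise_sqnorm g ` V)"
    using pointwise_sqnorm_le_dual_norm[OF assms(1)] by (auto simp: bdd_above_def)
  have "?S - \<eta>/2 < ?S" using assms(4) by simp
  then obtain y where y: "y \<in> V" "?S - \<eta>/2 < pointwise_sqnorm g y"
    using less_cSup_iff[OF _ bdd] assms(3) by auto
  then have "eventually (\<lambda>n. ?S - \<eta>/2 < partial_sqnorm g n y) sequentially"
    using order_tendstoD(1)[OF LIMSEQ_partial_sqnorm[OF assms(1)]] by blast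
  then obtain M where M: "N \<le> M" "?S - \<eta>/2 < partial_sqnorm g M y"
    unfolding eventually_sequentially by (meson nle_le)
  define W where "W = V \<inter> {z. ?S - \<eta>/2 < partial_sqnorm g M z}"
  show ?thesis
  proof (rule that)
    show "y \<in> W" "W \<subseteq> V" using y(1) M(2) by (auto simp: W_def)
    show "open W" unfolding W_def
      by (intro open_Int assms(2) open_Collect_less continuous_on_const partial_sqnorm_continuous[OF assms(1)])
    show "pointwise_sqnorm g z - partial_sqnorm g M z < \<eta>" if "z \<in> W" for z
    proof -
      have "z \<in> V" "?S - \<eta>/2 < partial_sqnorm g M z" using that by (auto simp: W_def)
      moreover from \<open>z \<in> V\<close> have "pointwise_sqnorm g z \<le> ?S" by (intro cSup_upper[OF _ bdd]) simp
      ultimately show ?thesis using assms(4) by linarith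
    qed
    show "N \<le> M" by (rule M(1))
  qed
qed

lemma closure_isCont_pointwise_sqnorm:
  fixes F :: "nat \<Rightarrow> 'a::t2_space \<Rightarrow> complex"
  assumes "compact (UNIV :: 'a set)" "F \<in> dual_HA"
  shows "closure {x. isCont (pointwise_sqnorm F) x} = UNIV"
proof -
  define G :: "nat \<Rightarrow> 'a set" where "G n =
    \<Union>{U. open U \<and> (\<exists>N. \<forall>y\<in>U. pointwise_sqnorm F y - partial_sqnorm F N y < 1 / Suc n)}" for n
  have "open (G n)" for n unfolding G_def by (rule open_Union) blast
  moreover have "V \<inter> G n \<noteq> {}" if V: "open V" "V \<noteq> {}" for n V
  proof -
    obtain y W M where "y \<in> W" "open W" "W \<subseteq> V"
      "\<And>z. z \<in> W \<Longrightarrow> pointwise_sqnorm F z - partial_sqnorm F M z < 1 / Suc n"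
      using exists_open_small_tail[OF assms(2) V, where \<eta> = "1 / Suc n" and N = 0] by auto
    then have "y \<in> G n" unfolding G_def by blast
    with \<open>y \<in> W\<close> \<open>W \<subseteq> V\<close> show ?thesis by blast
  qed
  ultimately have "closure (\<Inter>n. G n) = UNIV" by (rule closure_Inter_open_dense_eq_UNIV[OF assms(1)])
  moreover have "isCont (pointwise_sqnorm F) x" if x: "x \<in> (\<Inter>n. G n)" for x
  proof (rule isCont_if_locally_uniform_approx)
    fix e :: real assume "e > 0"
    then obtain n where n: "1 / Suc n < e" using nat_approx_posE by blast
    from x have "x \<in> G n" by blast
    then obtain U N where U: "open U" "x \<in> U"
      "\<And>y. y \<in> U \<Longrightarrow> pointwise_sqnorm F y - partial_sqnorm F N y < 1 / Suc n"
      unfolding G_def by auto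
    have "isCont (partial_sqnorm F N) x"
      using partial_sqnorm_continuous[OF assms(2)] by (simp add: continuous_on_eq_continuous_at)
    moreover have "\<bar>pointwise_sqnorm F y - partial_sqnorm F N y\<bar> < e" if "y \<in> U" for y
      using U(3)[OF that] partial_sqnorm_le_pointwise[OF assms(2), of N y] n by simp
    ultimately show "\<exists>g U. isCont g x \<and> open U \<and> x \<in> U \<and> (\<forall>y\<in>U. \<bar>pointwise_sqnorm F y - g y\<bar> < e)"
      using U(1,2) by blast
  qed
  ultimately show ?thesis using closure_mono[of "\<Inter>n. G n" "{x. isCont (pointwise_sqnorm F) x}"] by blast
qed

lemma small_tail_near_isCont:
  assumes "g \<in> dual_HA" "isCont (pointwise_sqnorm g) x" "\<eta> > 0"
  obtains U N where "open U" "x \<in> U"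
    "\<And>y M. y \<in> U \<Longrightarrow> N \<le> M \<Longrightarrow> pointwise_sqnorm g y - partial_sqnorm g M y < \<eta>"
proof -
  have "eventually (\<lambda>n. pointwise_sqnorm g x - \<eta>/3 < partial_sqnorm g n x) sequentially"
    by (rule order_tendstoD(1)[OF LIMSEQ_partial_sqnorm[OF assms(1)]]) (use assms(3) in simp)
  then obtain N where N: "pointwise_sqnorm g x - \<eta>/3 < partial_sqnorm g N x"
    by (auto simp: eventually_sequentially)
  have "pointwise_sqnorm g x \<in> {..< pointwise_sqnorm g x + \<eta>/3}" using assms(3) by simp
  then obtain U1 where U1: "open U1" "x \<in> U1"
    "\<And>y. y \<in> U1 \<Longrightarrow> pointwise_sqnorm g y < pointwise_sqnorm g x + \<eta>/3"
    using assms(2) continuous_at_open[of x "pointwise_sqnorm g"] by (metis lessThan_iff open_lessThan)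
  define U2 where "U2 = {y. partial_sqnorm g N x - \<eta>/3 < partial_sqnorm g N y}"
  have "open U2" unfolding U2_def
    by (intro open_Collect_less continuous_on_const partial_sqnorm_continuous[OF assms(1)])
  show ?thesis
  proof (rule that[of "U1 \<inter> U2" N])
    show "open (U1 \<inter> U2)" "x \<in> U1 \<inter> U2"
      using U1(1,2) \<open>open U2\<close> assms(3) by (auto simp: U2_def)
    show "pointwise_sqnorm g y - partial_sqnorm g M y < \<eta>" if "y \<in> U1 \<inter> U2" "N \<le> M" for y M
      using U1(3)[of y] that partial_sqnorm_mono[OF that(2), of g y] N by (auto simp: U2_def)
  qed
qed

text \<open>Of the tail of f beyond N, the part between N and M is controlled by Cauchy-Schwarz
  (the tail of F is small near x), and the part beyond M by locality on W (where the tail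
  of f is small); continuity of \<open>\<Phi> (seq_tail N f)\<close> transfers the estimate from y to x.\<close>
lemma bidual_HA_minus_pairing_le:
  fixes x :: "'a::t2_space"
  assumes cpt: "compact (UNIV :: 'a set)"
    and \<Phi>: "\<Phi> \<in> bidual_HA" "rep_seq \<Phi> = F" and F: "F \<in> dual_HA" and f: "f \<in> dual_HA"
    and C: "C \<ge> 0" "\<And>f x. f \<in> dual_HA \<Longrightarrow> cmod (\<Phi> f x) \<le> C * dual_norm f"
    and x: "isCont (pointwise_sqnorm F) x" and \<eta>: "\<eta> > 0"
  shows "cmod (\<Phi> f x - pairing F f x) \<le> \<eta> + (C + 3 * dual_norm f) * sqrt \<eta>"
proof -
  let ?P = "\<lambda>M y. \<Sum>i<M. cnj (F i y) * f i y"
  let ?T = "sqrt \<eta> * dual_norm f"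
  obtain U N where U: "open U" "x \<in> U"
    "\<And>y M. y \<in> U \<Longrightarrow> N \<le> M \<Longrightarrow> pointwise_sqnorm F y - partial_sqnorm F M y < \<eta>"
    using small_tail_near_isCont[OF F x \<eta>] by blast
  have pairing_tail: "cmod (pairing F f y - ?P M y) \<le> ?T" if "y \<in> U" "N \<le> M" for y M
    using pairing_minus_partial_sum_le[OF F f U(3)[OF that]] .
  define D where "D = \<Phi> (seq_tail N f)"
  have "isCont D x"
    using bidual_HA_continuous[OF \<Phi>(1) dual_HA_seq_tail[OF f]]
    by (simp add: D_def continuous_on_eq_continuous_at)
  then obtain V where V: "open V" "x \<in> V" "\<And>y. y \<in> V \<Longrightarrow> D y \<in> ball (D x) \<eta>"
    using continuous_at_open[of x D] open_ball centre_in_ball \<eta> by metis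
  have "U \<inter> V \<noteq> {}" using U(2) V(2) by blast
  then obtain y W M where W: "y \<in> W" "open W" "W \<subseteq> U \<inter> V" "N \<le> M"
    "\<And>z. z \<in> W \<Longrightarrow> pointwise_sqnorm f z - partial_sqnorm f M z < \<eta>"
    using exists_open_small_tail[OF f open_Int[OF U(1) V(1)] _ \<eta>, where N = N] by blast
  have local: "cmod (\<Phi> (seq_tail M f) y) \<le> C * sqrt \<eta>"
  proof (rule bidual_HA_local_bound[OF cpt \<Phi>(1) C dual_HA_seq_tail[OF f] W(2,1)])
    show "partial_sqnorm (seq_tail M f) K z \<le> (sqrt \<eta>)\<^sup>2" if "z \<in> W" for K z
      using partial_sqnorm_seq_tail[OF f, of M K z] W(5)[OF that] \<eta> by simp
  qed (use \<eta> in auto)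
  have triangle: "cmod (a + b + c + d - e) \<le> cmod a + cmod b + cmod c + cmod d + cmod e"
    for a b c d e
    using norm_triangle_ineq4[of "a + b + c + d" e] norm_triangle_ineq[of "a + b + c" d]
      norm_triangle_ineq[of "a + b" c] norm_triangle_ineq[of a b] by linarith
  have "\<Phi> f x - pairing F f x = (D x - D y) + \<Phi> (seq_tail M f) y + (?P M y - pairing F f y)
      + (pairing F f y - ?P N y) - (pairing F f x - ?P N x)"
    unfolding D_def bidual_HA_seq_tail[OF cpt \<Phi> f] by simp
  then have "cmod (\<Phi> f x - pairing F f x) \<le> cmod (D x - D y) + cmod (\<Phi> (seq_tail M f) y)
      + cmod (?P M y - pairing F f y) + cmod (pairing F f y - ?P N y) + cmod (pairing F f x - ?P N x)"
    by (simp only: triangle)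
  moreover have "cmod (D x - D y) < \<eta>" using V(3)[of y] W(1,3) by (auto simp: dist_norm)
  moreover have "cmod (?P M y - pairing F f y) \<le> ?T"
    using pairing_tail[of y M] W(1,3,4) by (auto simp: norm_minus_commute)
  moreover have "cmod (pairing F f y - ?P N y) \<le> ?T" "cmod (pairing F f x - ?P N x) \<le> ?T"
    using pairing_tail W(1,3) U(2) by auto
  ultimately have "cmod (\<Phi> f x - pairing F f x) \<le> \<eta> + C * sqrt \<eta> + 3 * ?T"
    using local by linarith
  then show ?thesis by (simp add: algebra_simps)
qed

lemma bidual_HA_eq_pairing:
  fixes x :: "'a::t2_space"
  assumes "compact (UNIV :: 'a set)" "\<Phi> \<in> bidual_HA" "rep_seq \<Phi> = F" "F \<in> dual_HA" "f \<in> dual_HA"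
    and "isCont (pointwise_sqnorm F) x"
  shows "\<Phi> f x = pairing F f x"
proof -
  obtain C where C: "C \<ge> 0" "\<And>f x. f \<in> dual_HA \<Longrightarrow> cmod (\<Phi> f x) \<le> C * dual_norm f"
    using bidual_HA_bound[OF assms(2)] by blast
  have "cmod (\<Phi> f x - pairing F f x) \<le> 0"
    using bidual_HA_minus_pairing_le[OF assms(1-5) C assms(6)] by (rule le_zero_if_le_eps_plus_sqrt)
  then show ?thesis by simp
qed

lemma bidual_HA_of_continuous_extensions:
  fixes F :: "nat \<Rightarrow> 'a::topological_space \<Rightarrow> complex"
  assumes cpt: "compact (UNIV :: 'a set)" and F: "F \<in> dual_HA" and E: "closure E = UNIV"
    and ext: "\<And>f. f \<in> dual_HA \<Longrightarrow> \<exists>\<alpha>\<in>CX. \<forall>x\<in>E. pairing F f x = \<alpha> x"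
  shows "\<exists>\<Phi>\<in>bidual_HA. rep_seq \<Phi> = F"
proof -
  define \<Phi> :: "(nat \<Rightarrow> 'a \<Rightarrow> complex) \<Rightarrow> 'a \<Rightarrow> complex"
    where "\<Phi> f = (SOME \<alpha>. \<alpha> \<in> CX \<and> (\<forall>x\<in>E. pairing F f x = \<alpha> x))" for f
  have \<Phi>: "\<Phi> f \<in> CX" "\<forall>x\<in>E. pairing F f x = \<Phi> f x" if "f \<in> dual_HA" for f
    using someI_ex[OF ext[OF that, unfolded Bex_def]] unfolding \<Phi>_def by blast+
  have \<Phi>_eq: "\<Phi> f = \<beta>" if "f \<in> dual_HA" "continuous_on UNIV \<beta>" "\<forall>x\<in>E. pairing F f x = \<beta> x" for f \<beta>
    using continuous_eq_on_dense[OF E _ that(2)] \<Phi>[OF that(1)] that(3) by (simp add: CX_def)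
  have "\<Phi> (\<lambda>i x. f i x + g i x) = (\<lambda>x. \<Phi> f x + \<Phi> g x)" if "f \<in> dual_HA" "g \<in> dual_HA" for f g
    using \<Phi>[OF that(1)] \<Phi>[OF that(2)] pairing_add[OF F that]
    by (intro \<Phi>_eq dual_HA_add[OF that] continuous_intros) (auto simp: CX_def)
  moreover have "\<Phi> (\<lambda>i x. f i x * a x) = (\<lambda>x. \<Phi> f x * a x)" if "f \<in> dual_HA" "a \<in> CX" for f a
    using \<Phi>[OF that(1)] that(2) pairing_mult[OF F that(1)]
    by (intro \<Phi>_eq dual_HA_mult[OF cpt that] continuous_intros) (auto simp: CX_def)
  moreover have "cmod (\<Phi> f x) \<le> dual_norm F * dual_norm f" if "f \<in> dual_HA" for f x
  proof -
    have "closed {x. cmod (\<Phi> f x) \<le> dual_norm F * dual_norm f}"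
      using \<Phi>(1)[OF that] by (intro closed_Collect_le continuous_intros) (auto simp: CX_def)
    moreover have "E \<subseteq> {x. cmod (\<Phi> f x) \<le> dual_norm F * dual_norm f}"
    proof
      fix x assume "x \<in> E"
      then show "x \<in> {x. cmod (\<Phi> f x) \<le> dual_norm F * dual_norm f}"
        using \<Phi>(2)[OF that] pairing_bound[OF F that, of x] by simp
    qed
    ultimately show ?thesis using closure_minimal[of E] E by blast
  qed
  ultimately have "\<Phi> \<in> bidual_HA" unfolding bidual_HA_def using \<Phi>(1) by blast
  moreover have "\<Phi> (hat_e i) = (\<lambda>x. cnj (F i x))" for i
    using dual_HA_continuous[OF F] pairing_hat_e[of F i]
    by (intro \<Phi>_eq dual_HA_hat_e continuous_intros) auto
  then have "rep_seq \<Phi> = F" by (simp add: rep_seq_def)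
  ultimately show ?thesis by blast
qed

lemma isCont_complex_of_real_iff:
  fixes f :: "'a::t2_space \<Rightarrow> real"
  shows "isCont (\<lambda>y. complex_of_real (f y)) x \<longleftrightarrow> isCont f x"
proof
  assume "isCont (\<lambda>y. complex_of_real (f y)) x"
  from isCont_Re[OF this] show "isCont f x" by simp
qed (intro continuous_intros)

theorem lemma3p3:
  fixes F :: "nat \<Rightarrow> 'a::t2_space \<Rightarrow> complex"
  assumes "compact (UNIV :: 'a set)"
    and "F \<in> dual_HA"
  defines "E \<equiv> {x. isCont (\<lambda>y. \<Sum>i. cnj (F i y) * F i y) x}"
  shows "((\<exists>\<Phi>\<in>bidual_HA. rep_seq \<Phi> = F) \<longleftrightarrow>
          (\<forall>f\<in>dual_HA. \<exists>\<alpha>\<in>CX. \<forall>x\<in>E. (\<Sum>i. cnj (F i x) * f i x) = \<alpha> x))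
      \<and> (\<forall>\<Phi>\<in>bidual_HA. rep_seq \<Phi> = F \<longrightarrow>
          (\<forall>f\<in>dual_HA. \<forall>\<alpha>\<in>CX. (\<forall>x\<in>E. (\<Sum>i. cnj (F i x) * f i x) = \<alpha> x) \<longrightarrow> \<Phi> f = \<alpha>))"
proof -
  have "E = {x. isCont (pointwise_sqnorm F) x}"
    unfolding E_def pairing_def[symmetric] pairing_self[OF assms(2)] isCont_complex_of_real_iff ..
  then have dense: "closure E = UNIV"
    using closure_isCont_pointwise_sqnorm[OF assms(1,2)] by simp
  have agree: "\<forall>x\<in>E. pairing F f x = \<Phi> f x"
    if "\<Phi> \<in> bidual_HA" "rep_seq \<Phi> = F" "f \<in> dual_HA" for \<Phi> f
    using bidual_HA_eq_pairing[OF assms(1) that(1,2) assms(2) that(3)] \<open>E = _\<close> by simp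
  have "\<exists>\<alpha>\<in>CX. \<forall>x\<in>E. pairing F f x = \<alpha> x"
    if "\<exists>\<Phi>\<in>bidual_HA. rep_seq \<Phi> = F" "f \<in> dual_HA" for f
    using that agree unfolding bidual_HA_def by blast
  moreover have "\<Phi> f = \<alpha>" if "\<Phi> \<in> bidual_HA" "rep_seq \<Phi> = F" "f \<in> dual_HA" "\<alpha> \<in> CX"
    "\<forall>x\<in>E. pairing F f x = \<alpha> x" for \<Phi> f \<alpha>
    using continuous_eq_on_dense[OF dense bidual_HA_continuous[OF that(1,3)]] that(4,5) agree[OF that(1-3)]
    by (simp add: CX_def)
  ultimately show ?thesis
    unfolding pairing_def[symmetric]
    using bidual_HA_of_continuous_extensions[OF assms(1,2) dense] by blast
qed

end
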